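(* Let $k,k'\ge1$ be integers and $\varepsilon>0$. Let $x,y\in\mathbb{R}^k_{\ge0}$, $x',y'\in\mathbb{R}^{k'}_{\ge0}$ and $r,r'\in\mathbb{R}$ satisfy $$(x^\top\mathbf{1}_k)^2+\|x\|^2=(x'^\top\mathbf{1}_{k'})^2+\|x'\|^2=\varepsilon^2$$ and $$x^\top\mathbf{1}_k+x'^\top\mathbf{1}_{k'}=r+r'+\varepsilon\sqrt2.$$ Then $\|x+y+r\mathbf{1}_k\|^2+\|x'+y'+r'\mathbf{1}_{k'}\|^2\ge\varepsilon^2$.
   Context: $\mathbf{1}_k$ denotes the all-ones vector in $\mathbb{R}^k$, $\|\cdot\|$ the Euclidean norm, and $\mathbb{R}^k_{\ge0}$ the vectors with nonnegative entries. *)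

theory Defs
  imports "HOL-Analysis.Analysis"
begin

definition ones_vec :: "real^'n" where
  "ones_vec = (\<chi> i. 1)"

end

theory Submission
  imports Defs
begin

text \<open>Write \<open>s = x \<bullet> 1\<close>, \<open>s' = x' \<bullet> 1\<close> and assume \<open>s' \<le> s\<close>. Since \<open>x \<ge> 0\<close>,
  \<open>\<parallel>x\<parallel>\<^sup>2 \<le> s\<^sup>2\<close>, so the constraint forces \<open>\<surd>2 s' \<ge> \<epsilon>\<close>. For \<open>a = x + y + r 1\<close> and any
  test vector \<open>w \<ge> 0\<close> we have \<open>\<parallel>a\<parallel>\<^sup>2 \<ge> 2 a \<bullet> w - \<parallel>w\<parallel>\<^sup>2 \<ge> \<parallel>x\<parallel>\<^sup>2 - \<parallel>w - x\<parallel>\<^sup>2 + 2 r (w \<bullet> 1)\<close>.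
  Testing the first block with \<open>x\<close> and the second with \<open>x'\<close> raised by \<open>s - s'\<close> in one
  coordinate (so that both test vectors have sum \<open>s\<close>) leaves
  \<open>(\<surd>2 s' - \<epsilon>)\<^sup>2 + 2\<surd>2 (s - s') (\<surd>2 s' - \<epsilon>) \<ge> 0\<close>.\<close>

lemma inner_ones_vec: "x \<bullet> (ones_vec :: real^'n) = (\<Sum>i\<in>UNIV. x $ i)"
  by (simp add: inner_vec_def ones_vec_def)

lemma inner_nonneg_if_nonneg:
  fixes a b :: "real^'n"
  assumes "\<forall>i. a $ i \<ge> 0" and "\<forall>i. b $ i \<ge> 0"
  shows "a \<bullet> b \<ge> 0"
  unfolding inner_vec_def using assms by (auto intro!: sum_nonneg)

lemma power2_norm_le_power2_inner_ones:
  fixes x :: "real^'n"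
  assumes "\<forall>i. x $ i \<ge> 0"
  shows "(norm x)\<^sup>2 \<le> (x \<bullet> ones_vec)\<^sup>2"
proof -
  have "(norm x)\<^sup>2 = (\<Sum>i\<in>UNIV. x $ i * x $ i)"
    by (simp add: power2_norm_eq_inner inner_vec_def)
  also have "\<dots> \<le> (\<Sum>i\<in>UNIV. x $ i * (\<Sum>j\<in>UNIV. x $ j))"
    using assms by (intro sum_mono mult_left_mono) (auto intro: member_le_sum)
  also have "\<dots> = (x \<bullet> ones_vec)\<^sup>2"
    by (simp add: inner_ones_vec power2_eq_square sum_distrib_right)
  finally show ?thesis .
qed

lemma epsilon_le_sqrt2_inner_ones:
  fixes x :: "real^'n"
  assumes "\<forall>i. x $ i \<ge> 0"
    and "(x \<bullet> ones_vec)\<^sup>2 + (norm x)\<^sup>2 = \<epsilon>\<^sup>2"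
  shows "\<epsilon> \<le> sqrt 2 * (x \<bullet> ones_vec)"
proof -
  have "\<epsilon>\<^sup>2 \<le> (sqrt 2 * (x \<bullet> ones_vec))\<^sup>2"
    using assms power2_norm_le_power2_inner_ones[OF assms(1)] by (simp add: power_mult_distrib)
  moreover have "0 \<le> sqrt 2 * (x \<bullet> ones_vec)"
    using assms(1) by (simp add: inner_ones_vec sum_nonneg)
  ultimately show ?thesis
    by (rule power2_le_imp_le)
qed

lemma power2_norm_shift_ge:
  fixes x y w :: "real^'n"
  assumes "\<forall>i. y $ i \<ge> 0" and "\<forall>i. w $ i \<ge> 0"
  shows "(norm x)\<^sup>2 - (norm (w - x))\<^sup>2 + 2 * r * (w \<bullet> ones_vec) \<le> (norm (x + y + r *\<^sub>R ones_vec))\<^sup>2"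
proof -
  let ?a = "x + y + r *\<^sub>R ones_vec"
  have "0 \<le> (norm (?a - w))\<^sup>2" by simp
  then have "2 * (?a \<bullet> w) - (norm w)\<^sup>2 \<le> (norm ?a)\<^sup>2"
    by (simp add: power2_norm_eq_inner inner_diff_left inner_diff_right inner_commute)
  moreover have "?a \<bullet> w = x \<bullet> w + y \<bullet> w + r * (w \<bullet> ones_vec)"
    by (simp add: inner_add_left inner_commute[of ones_vec w])
  moreover have "0 \<le> y \<bullet> w"
    using inner_nonneg_if_nonneg assms by blast
  moreover have "(norm (w - x))\<^sup>2 = (norm w)\<^sup>2 - 2 * (x \<bullet> w) + (norm x)\<^sup>2"
    by (simp add: power2_norm_eq_inner inner_diff_left inner_diff_right inner_commute)
  ultimately show ?thesis by linarith
qed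

lemma sqrt2_two_block_bound:
  fixes s s' \<epsilon> :: real
  assumes "s' \<le> s" and "\<epsilon> \<le> sqrt 2 * s'"
  shows "2 * sqrt 2 * \<epsilon> * s + 2 * s'\<^sup>2 \<le> \<epsilon>\<^sup>2 + 4 * s * s'"
proof -
  have "\<epsilon>\<^sup>2 + 4 * s * s' - (2 * sqrt 2 * \<epsilon> * s + 2 * s'\<^sup>2)
      = (sqrt 2 * s' - \<epsilon>)\<^sup>2 + 2 * sqrt 2 * (s - s') * (sqrt 2 * s' - \<epsilon>)"
    by (simp add: power2_eq_square algebra_simps)
  moreover have "0 \<le> 2 * sqrt 2 * (s - s') * (sqrt 2 * s' - \<epsilon>)"
    using assms by simp
  ultimately show ?thesis
    using zero_le_power2[of "sqrt 2 * s' - \<epsilon>"] by linarith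
qed

lemma two_block_bound_ordered:
  fixes x y :: "real^'k" and x' y' :: "real^'m" and r r' \<epsilon> :: real
  assumes "\<forall>i. x $ i \<ge> 0" and "\<forall>i. y $ i \<ge> 0"
    and "\<forall>i. x' $ i \<ge> 0" and "\<forall>i. y' $ i \<ge> 0"
    and "(x \<bullet> ones_vec)\<^sup>2 + (norm x)\<^sup>2 = \<epsilon>\<^sup>2"
    and "(x' \<bullet> ones_vec)\<^sup>2 + (norm x')\<^sup>2 = \<epsilon>\<^sup>2"
    and "x \<bullet> ones_vec + x' \<bullet> ones_vec = r + r' + \<epsilon> * sqrt 2"
    and "x' \<bullet> ones_vec \<le> x \<bullet> ones_vec"
  shows "\<epsilon>\<^sup>2 \<le> (norm (x + y + r *\<^sub>R ones_vec))\<^sup>2 + (norm (x' + y' + r' *\<^sub>R ones_vec))\<^sup>2"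
proof -
  define s s' where "s = x \<bullet> ones_vec" and "s' = x' \<bullet> ones_vec"
  obtain j :: 'm where True by blast
  define w' where "w' = x' + (s - s') *\<^sub>R axis j 1"
  have first: "(norm x)\<^sup>2 + 2 * r * s \<le> (norm (x + y + r *\<^sub>R ones_vec))\<^sup>2"
    using power2_norm_shift_ge[OF assms(2,1), of x r] by (simp add: s_def)
  have "\<forall>i. w' $ i \<ge> 0"
    using assms(3,8) by (simp add: w'_def axis_def s_def s'_def)
  moreover have "w' \<bullet> ones_vec = s"
    by (simp add: w'_def inner_add_left inner_commute[of "axis j 1"] inner_axis ones_vec_def s'_def)
  moreover have "norm (w' - x') = s - s'"
    using assms(8) by (simp add: w'_def s_def s'_def)
  ultimately have second: "(norm x')\<^sup>2 - (s - s')\<^sup>2 + 2 * r' * s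
      \<le> (norm (x' + y' + r' *\<^sub>R ones_vec))\<^sup>2"
    using power2_norm_shift_ge[OF assms(4), of w' x' r'] by simp
  have "2 * sqrt 2 * \<epsilon> * s + 2 * s'\<^sup>2 \<le> \<epsilon>\<^sup>2 + 4 * s * s'"
    using sqrt2_two_block_bound assms(8) epsilon_le_sqrt2_inner_ones[OF assms(3,6)]
    by (simp add: s_def s'_def)
  moreover have "2 * r * s + 2 * r' * s = 2 * s\<^sup>2 + 2 * s * s' - 2 * sqrt 2 * \<epsilon> * s"
  proof -
    have r': "r' = s + s' - \<epsilon> * sqrt 2 - r"
      using assms(7) by (simp add: s_def s'_def)
    show ?thesis unfolding r' by (simp add: algebra_simps power2_eq_square)
  qed
  moreover have "(s - s')\<^sup>2 = s\<^sup>2 - 2 * s * s' + s'\<^sup>2"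
    by (simp add: power2_diff)
  ultimately show ?thesis
    using first second assms(5,6) unfolding s_def[symmetric] s'_def[symmetric]
    by linarith
qed

theorem lemma1:
  fixes x y :: "real^'k" and x' y' :: "real^'m" and r r' \<epsilon> :: real
  assumes "\<epsilon> > 0"
    and "\<forall>i. x $ i \<ge> 0" and "\<forall>i. y $ i \<ge> 0"
    and "\<forall>i. x' $ i \<ge> 0" and "\<forall>i. y' $ i \<ge> 0"
    and "(x \<bullet> ones_vec)\<^sup>2 + (norm x)\<^sup>2 = \<epsilon>\<^sup>2"
    and "(x' \<bullet> ones_vec)\<^sup>2 + (norm x')\<^sup>2 = \<epsilon>\<^sup>2"
    and "x \<bullet> ones_vec + x' \<bullet> ones_vec = r + r' + \<epsilon> * sqrt 2"
  shows "(norm (x + y + r *\<^sub>R ones_vec))\<^sup>2 + (norm (x' + y' + r' *\<^sub>R ones_vec))\<^sup>2 \<ge> \<epsilon>\<^sup>2"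
proof (cases "x' \<bullet> ones_vec \<le> x \<bullet> ones_vec")
  case True
  then show ?thesis
    using two_block_bound_ordered[OF assms(2-8)] by simp
next
  case False
  then show ?thesis
    using two_block_bound_ordered[OF assms(4,5,2,3,7,6), of r' r] assms(8) by simp
qed

end
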